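(* Let $(V,e)$ be a unital $\ast$-normed space, let $\varepsilon>1/\|e\|$, put $S_{\varepsilon}=V_{he}^{\ast}\cap\varepsilon\operatorname{ball}V^{\ast}$ and $\mathfrak{c}_{\varepsilon}=\{v\in V_h:\langle v,\varphi\rangle\ge 0\ \forall\varphi\in S_{\varepsilon}\}$. Then $\mathfrak{c}_{\varepsilon}$ is a separated, closed, unital cone in $V$ whose state space satisfies $S(\mathfrak{c}_{\varepsilon})=S_{\varepsilon}$, and $(V,\mathfrak{c}_{\varepsilon})$ is a concrete function system on $S_{\varepsilon}$ whose $\varepsilon$-norm $\|v\|_{\varepsilon}=\sup\{|\langle v,\varphi\rangle|:\varphi\in S_{\varepsilon}\}$ is equivalent to the original norm of $V$.
   Context: A $\ast$-normed space is a complex vector space $V$ with an involution and a norm with $\|v^{\ast}\|=\|v\|$. $V_h$ is the real space of hermitian elements; $V^{\ast}$ has involution $\langle v,\varphi^{\ast}\rangle=\overline{\langle v^{\ast},\varphi\rangle}$, and $V_h^{\ast}$ is the set of bounded hermitian functionals. For nonzero $e\in V_h$, $V_{he}^{\ast}=\{y\in V_h^{\ast}:\langle e,y\rangle=1\}$; $(V,e)$ is a unital $\ast$-normed space if $V_{he}^{\ast}\cap\operatorname{ball}V^{\ast}\neq\varnothing$. A cone $\mathfrak{c}\subseteq V_h$ is separated if $\mathfrak{c}\cap(-\mathfrak{c})=\{0\}$, unital if for every $v\in V_h$ there is $r\ge0$ with $v+re\in\mathfrak{c}$; its state space is $S(\mathfrak{c})=\{\varphi:V\to\mathbb{C}\text{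 linear}:\langle\mathfrak{c},\varphi\rangle\ge0,\ \langle e,\varphi\rangle=1\}$. "$(V,\mathfrak{c})$ is a concrete function system on $K$" (with $K$ a weak$^*$-compact set of states carrying the weak$^*$ topology) means that the unital $\ast$-linear map $\Phi:V\to C(K)$, $\Phi(v)(\varphi)=\langle v,\varphi\rangle$, is an isometry from $(V,\sup_{\varphi\in K}|\langle\cdot,\varphi\rangle|)$ onto its range and an order isomorphism onto its range: $\Phi(\mathfrak{c})=\Phi(V_h)\cap C(K)_+$. *)

theory Defs
  imports "HOL-Analysis.Analysis"
begin

text \<open>A complex normed space is modelled as a real normed vector space 'v (whose
topology is the norm topology) together with a complex scalar multiplication sm
extending the real one and satisfying norm (sm a x) = cmod a * norm x.\<close>

definition star_normed_space :: "(complex \<Rightarrow> 'v::real_normed_vector \<Rightarrow> 'v) \<Rightarrow> ('v \<Rightarrow> 'v) \<Rightarrow> bool" where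
  "star_normed_space sm st \<longleftrightarrow>
     (\<forall>r x. sm (complex_of_real r) x = scaleR r x) \<and>
     (\<forall>a b x. sm (a + b) x = sm a x + sm b x) \<and>
     (\<forall>a x y. sm a (x + y) = sm a x + sm a y) \<and>
     (\<forall>a b x. sm a (sm b x) = sm (a * b) x) \<and>
     (\<forall>a x. norm (sm a x) = cmod a * norm x) \<and>
     (\<forall>x. st (st x) = x) \<and>
     (\<forall>x y. st (x + y) = st x + st y) \<and>
     (\<forall>a x. st (sm a x) = sm (cnj a) (st x)) \<and>
     (\<forall>x. norm (st x) = norm x)"

definition clin_fun :: "(complex \<Rightarrow> 'v::real_normed_vector \<Rightarrow> 'v) \<Rightarrow> ('v \<Rightarrow> complex) \<Rightarrow> bool" where
  "clin_fun sm \<phi> \<longleftrightarrow> (\<forall>x y. \<phi> (x + y) = \<phi> x + \<phi> y) \<and> (\<forall>a x. \<phi> (sm a x) = a * \<phi> x)"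

definition bdd_fun :: "('v::real_normed_vector \<Rightarrow> complex) \<Rightarrow> bool" where
  "bdd_fun \<phi> \<longleftrightarrow> (\<exists>K. \<forall>x. cmod (\<phi> x) \<le> K * norm x)"

definition dual_norm :: "('v::real_normed_vector \<Rightarrow> complex) \<Rightarrow> real" where
  "dual_norm \<phi> = (SUP x\<in>{x. norm x \<le> 1}. cmod (\<phi> x))"

definition dual_space :: "(complex \<Rightarrow> 'v::real_normed_vector \<Rightarrow> 'v) \<Rightarrow> ('v \<Rightarrow> complex) set" where
  "dual_space sm = {\<phi>. clin_fun sm \<phi> \<and> bdd_fun \<phi>}"

definition dual_ball :: "(complex \<Rightarrow> 'v::real_normed_vector \<Rightarrow> 'v) \<Rightarrow> real \<Rightarrow> ('v \<Rightarrow> complex) set" where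
  "dual_ball sm r = {\<phi>\<in>dual_space sm. dual_norm \<phi> \<le> r}"

definition fun_star :: "('v \<Rightarrow> 'v) \<Rightarrow> ('v \<Rightarrow> complex) \<Rightarrow> ('v \<Rightarrow> complex)" where
  "fun_star st \<phi> = (\<lambda>v. cnj (\<phi> (st v)))"

definition herm_part :: "('v \<Rightarrow> 'v) \<Rightarrow> 'v set" where
  "herm_part st = {v. st v = v}"

definition dual_herm :: "(complex \<Rightarrow> 'v::real_normed_vector \<Rightarrow> 'v) \<Rightarrow> ('v \<Rightarrow> 'v) \<Rightarrow> ('v \<Rightarrow> complex) set" where
  "dual_herm sm st = {\<phi>\<in>dual_space sm. fun_star st \<phi> = \<phi>}"

definition dual_herm_e :: "(complex \<Rightarrow> 'v::real_normed_vector \<Rightarrow> 'v) \<Rightarrow> ('v \<Rightarrow> 'v) \<Rightarrow> 'v \<Rightarrow> ('v \<Rightarrow> complex) set" where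
  "dual_herm_e sm st e = {\<phi>\<in>dual_herm sm st. \<phi> e = 1}"

definition unital_star_normed_space :: "(complex \<Rightarrow> 'v::real_normed_vector \<Rightarrow> 'v) \<Rightarrow> ('v \<Rightarrow> 'v) \<Rightarrow> 'v \<Rightarrow> bool" where
  "unital_star_normed_space sm st e \<longleftrightarrow> star_normed_space sm st \<and> e \<in> herm_part st \<and> e \<noteq> 0 \<and>
     dual_herm_e sm st e \<inter> dual_ball sm 1 \<noteq> {}"

definition is_cone :: "('v \<Rightarrow> 'v) \<Rightarrow> 'v::real_normed_vector set \<Rightarrow> bool" where
  "is_cone st c \<longleftrightarrow> c \<subseteq> herm_part st \<and> c \<noteq> {} \<and>
     (\<forall>x\<in>c. \<forall>y\<in>c. x + y \<in> c) \<and> (\<forall>x\<in>c. \<forall>r::real. r \<ge> 0 \<longrightarrow> scaleR r x \<in> c)"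

definition separated_cone :: "'v::real_normed_vector set \<Rightarrow> bool" where
  "separated_cone c \<longleftrightarrow> c \<inter> uminus ` c = {0}"

definition unital_cone :: "('v \<Rightarrow> 'v) \<Rightarrow> 'v::real_normed_vector \<Rightarrow> 'v set \<Rightarrow> bool" where
  "unital_cone st e c \<longleftrightarrow> (\<forall>v\<in>herm_part st. \<exists>r::real. r \<ge> 0 \<and> v + scaleR r e \<in> c)"

definition cnonneg :: "complex \<Rightarrow> bool" where
  "cnonneg z \<longleftrightarrow> Im z = 0 \<and> 0 \<le> Re z"

text \<open>State space S(c): all linear functionals (not assumed bounded), positive on c, 1 at e.\<close>
definition state_space :: "(complex \<Rightarrow> 'v::real_normed_vector \<Rightarrow> 'v) \<Rightarrow> 'v \<Rightarrow> 'v set \<Rightarrow> ('v \<Rightarrow> complex) set" where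
  "state_space sm e c = {\<phi>. clin_fun sm \<phi> \<and> (\<forall>v\<in>c. cnonneg (\<phi> v)) \<and> \<phi> e = 1}"

text \<open>Functions 'v \<Rightarrow> complex carry the
product (pointwise) topology, which on sets of functionals is the weak* topology.\<close>
definition concrete_function_system ::
  "(complex \<Rightarrow> 'v::real_normed_vector \<Rightarrow> 'v) \<Rightarrow> ('v \<Rightarrow> 'v) \<Rightarrow> 'v \<Rightarrow> 'v set \<Rightarrow> ('v \<Rightarrow> complex) set \<Rightarrow> bool" where
  "concrete_function_system sm st e c K \<longleftrightarrow>
     K \<subseteq> state_space sm e c \<and> compact K \<and>
     (\<forall>v. continuous_on K (\<lambda>\<phi>. \<phi> v)) \<and>
     (\<forall>\<phi>\<in>K. \<phi> e = 1) \<and>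
     (\<forall>v. \<forall>\<phi>\<in>K. \<phi> (st v) = cnj (\<phi> v)) \<and>
     inj_on (\<lambda>v. restrict (\<lambda>\<phi>. \<phi> v) K) UNIV \<and>
     (\<lambda>v. restrict (\<lambda>\<phi>. \<phi> v) K) ` c =
       (\<lambda>v. restrict (\<lambda>\<phi>. \<phi> v) K) ` herm_part st \<inter> {f. \<forall>\<phi>\<in>K. cnonneg (f \<phi>)}"

definition S_eps :: "(complex \<Rightarrow> 'v::real_normed_vector \<Rightarrow> 'v) \<Rightarrow> ('v \<Rightarrow> 'v) \<Rightarrow> 'v \<Rightarrow> real \<Rightarrow> ('v \<Rightarrow> complex) set" where
  "S_eps sm st e \<epsilon> = dual_herm_e sm st e \<inter> dual_ball sm \<epsilon>"

definition cone_eps :: "(complex \<Rightarrow> 'v::real_normed_vector \<Rightarrow> 'v) \<Rightarrow> ('v \<Rightarrow> 'v) \<Rightarrow> 'v \<Rightarrow> real \<Rightarrow> 'v set" where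
  "cone_eps sm st e \<epsilon> = {v\<in>herm_part st. \<forall>\<phi>\<in>S_eps sm st e \<epsilon>. cnonneg (\<phi> v)}"

definition norm_eps :: "(complex \<Rightarrow> 'v::real_normed_vector \<Rightarrow> 'v) \<Rightarrow> ('v \<Rightarrow> 'v) \<Rightarrow> 'v \<Rightarrow> real \<Rightarrow> 'v \<Rightarrow> real" where
  "norm_eps sm st e \<epsilon> v = (SUP \<phi>\<in>S_eps sm st e \<epsilon>. cmod (\<phi> v))"

end

theory Submission
  imports Defs
begin

(* The heart of the matter is that S_eps norms V up to a constant.  Hahn-Banach (for real
   normed spaces via a minimal sublinear functional below the norm, found with Zorn's lemma,
   then complexified and made hermitian) gives a hermitian state phi0 with
   norm phi0 = 1 / norm e < eps, and for hermitian h a hermitian functional psi of norm 1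
   with psi h = norm h.  For small t > 0 the perturbation phi0 + t (psi - psi e * phi0) is
   still in S_eps, and phi0 or this perturbation has size at least c * norm h at h.
   Splitting v into hermitian real and imaginary parts then gives |s v| >= c * norm v for
   some s in S_eps.  The rest follows from h + eps * norm h * e lying in the cone: the cone
   is unital, and every state of it is hermitian and eps-bounded, i.e. lies in S_eps.
   The unitality hypothesis on (V, e) is used only through e being hermitian and nonzero:
   Hahn-Banach already supplies the state phi0. *)

section \<open>Hahn-Banach via minimal sublinear functionals\<close>

definition sublinear :: "('v::real_vector \<Rightarrow> real) \<Rightarrow> bool" where
  "sublinear q \<longleftrightarrow> (\<forall>x y. q (x + y) \<le> q x + q y) \<and> (\<forall>t x. 0 \<le> t \<longrightarrow> q (t *\<^sub>R x) = t * q x)"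

lemma sublinear_add_le: "sublinear q \<Longrightarrow> q (x + y) \<le> q x + q y"
  by (simp add: sublinear_def)

lemma sublinear_scaleR: "sublinear q \<Longrightarrow> 0 \<le> t \<Longrightarrow> q (t *\<^sub>R x) = t * q x"
  by (simp add: sublinear_def)

lemma sublinear_zero: "sublinear q \<Longrightarrow> q 0 = 0"
  using sublinear_scaleR[of q 0 0] by simp

lemma sublinear_minus_le: "sublinear q \<Longrightarrow> - q (- x) \<le> q x"
  using sublinear_add_le[of q x "- x"] sublinear_zero[of q] by simp

lemma sublinear_norm: "sublinear norm"
  by (simp add: sublinear_def norm_triangle_ineq)

lemma sublinearI:
  assumes "\<And>x y. q (x + y) \<le> q x + q y"
    and "q 0 = 0"
    and "\<And>t x. 0 < t \<Longrightarrow> q (t *\<^sub>R x) \<le> t * q x"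
  shows "sublinear q"
  unfolding sublinear_def
proof (intro conjI allI impI assms(1))
  fix t :: real and x assume "0 \<le> t"
  show "q (t *\<^sub>R x) = t * q x"
  proof (cases "t = 0")
    case False
    with \<open>0 \<le> t\<close> have t: "0 < t" by simp
    have "t * q x = t * q (inverse t *\<^sub>R (t *\<^sub>R x))"
      using t by simp
    also have "\<dots> \<le> q (t *\<^sub>R x)"
      using assms(3)[of "inverse t" "t *\<^sub>R x"] t by (simp add: field_simps)
    finally show ?thesis using assms(3)[OF t, of x] by linarith
  qed (simp add: assms(2))
qed

definition directional_inf :: "('v::real_vector \<Rightarrow> real) \<Rightarrow> 'v \<Rightarrow> 'v \<Rightarrow> real" where
  "directional_inf q y x = (INF t\<in>{0..}. q (x + t *\<^sub>R y) - t * q y)"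

lemma directional_inf_le:
  assumes q: "sublinear q" and t: "0 \<le> t"
  shows "directional_inf q y x \<le> q (x + t *\<^sub>R y) - t * q y"
proof -
  have "- q (- x) \<le> q (x + s *\<^sub>R y) - s * q y" if "0 \<le> s" for s
    using sublinear_add_le[OF q, of "x + s *\<^sub>R y" "- x"] sublinear_scaleR[OF q that] by simp
  then have "bdd_below ((\<lambda>s. q (x + s *\<^sub>R y) - s * q y) ` {0..})"
    by (intro bdd_belowI2[where m = "- q (- x)"]) auto
  then show ?thesis
    unfolding directional_inf_def using t by (intro cINF_lower) auto
qed

lemma directional_inf_greatest:
  "(\<And>t. 0 \<le> t \<Longrightarrow> c \<le> q (x + t *\<^sub>R y) - t * q y) \<Longrightarrow> c \<le> directional_inf q y x"
  unfolding directional_inf_def by (rule cINF_greatest) auto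

lemma directional_inf_le_self: "sublinear q \<Longrightarrow> directional_inf q y x \<le> q x"
  using directional_inf_le[of q 0 y x] by simp

lemma sublinear_directional_inf:
  assumes q: "sublinear q"
  shows "sublinear (directional_inf q y)"
proof (rule sublinearI)
  fix x1 x2
  have "directional_inf q y (x1 + x2) - (q (x2 + s *\<^sub>R y) - s * q y) \<le> directional_inf q y x1"
    if s: "0 \<le> s" for s
  proof (rule directional_inf_greatest)
    fix r :: real assume r: "0 \<le> r"
    have "directional_inf q y (x1 + x2) \<le> q ((x1 + r *\<^sub>R y) + (x2 + s *\<^sub>R y)) - (r + s) * q y"
      using directional_inf_le[OF q, of "r + s" y "x1 + x2"] r s by (simp add: algebra_simps)
    also have "\<dots> \<le> q (x1 + r *\<^sub>R y) + q (x2 + s *\<^sub>R y) - (r + s) * q y"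
      using sublinear_add_le[OF q] by simp
    finally show "directional_inf q y (x1 + x2) - (q (x2 + s *\<^sub>R y) - s * q y)
        \<le> q (x1 + r *\<^sub>R y) - r * q y"
      by (simp add: algebra_simps)
  qed
  then have "directional_inf q y (x1 + x2) - directional_inf q y x1 \<le> directional_inf q y x2"
    by (intro directional_inf_greatest) (simp add: algebra_simps)
  then show "directional_inf q y (x1 + x2) \<le> directional_inf q y x1 + directional_inf q y x2"
    by simp
next
  have "directional_inf q y 0 \<le> 0"
    using directional_inf_le_self[OF q] sublinear_zero[OF q] by metis
  moreover have "0 \<le> directional_inf q y 0"
    by (rule directional_inf_greatest) (simp add: sublinear_scaleR[OF q])
  ultimately show "directional_inf q y 0 = 0" by simp
next
  fix t :: real and x assume t: "0 < t"
  have "directional_inf q y (t *\<^sub>R x) / t \<le> directional_inf q y x"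
  proof (rule directional_inf_greatest)
    fix s :: real assume s: "0 \<le> s"
    have "directional_inf q y (t *\<^sub>R x) \<le> q (t *\<^sub>R x + (t * s) *\<^sub>R y) - (t * s) * q y"
      using directional_inf_le[OF q, of "t * s" y "t *\<^sub>R x"] s t by simp
    also have "q (t *\<^sub>R x + (t * s) *\<^sub>R y) = t * q (x + s *\<^sub>R y)"
      using sublinear_scaleR[OF q, of t "x + s *\<^sub>R y"] t by (simp add: scaleR_add_right)
    finally show "directional_inf q y (t *\<^sub>R x) / t \<le> q (x + s *\<^sub>R y) - s * q y"
      using t by (simp add: field_simps)
  qed
  then show "directional_inf q y (t *\<^sub>R x) \<le> t * directional_inf q y x"
    using t by (simp add: field_simps)
qed

lemma Inf_fun_lower_bdd:
  fixes C :: "('a \<Rightarrow> real) set"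
  assumes "q \<in> C" and "\<And>q'. q' \<in> C \<Longrightarrow> g \<le> q'"
  shows "Inf C \<le> q"
proof (rule le_funI)
  fix x
  have "bdd_below ((\<lambda>q'. q' x) ` C)"
    using assms(2) by (intro bdd_belowI2[where m = "g x"]) (auto dest: le_funD)
  then show "Inf C x \<le> q x"
    unfolding Inf_apply using assms(1) by (rule cINF_lower)
qed

lemma sublinear_minus_le_bound:
  "sublinear q \<Longrightarrow> q \<le> p \<Longrightarrow> (\<lambda>x. - p (- x)) \<le> q"
  using sublinear_minus_le[of q] by (smt (verit) le_fun_def)

lemma sublinear_Inf_chain:
  assumes "C \<noteq> {}" and sub: "\<And>q. q \<in> C \<Longrightarrow> sublinear q \<and> q \<le> p" and "sublinear p"
    and chain: "\<And>q q'. q \<in> C \<Longrightarrow> q' \<in> C \<Longrightarrow> q \<le> q' \<or> q' \<le> q"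
  shows "sublinear (Inf C)"
proof -
  have Inf_le: "Inf C x \<le> q x" if "q \<in> C" for q x
    using Inf_fun_lower_bdd[OF that] sub sublinear_minus_le_bound by (metis le_funD)
  have le_Inf: "c \<le> Inf C x" if "\<And>q. q \<in> C \<Longrightarrow> c \<le> q x" for c x
    unfolding Inf_apply using \<open>C \<noteq> {}\<close> that by (intro cINF_greatest)
  show ?thesis
  proof (rule sublinearI)
    fix x y
    have Inf_add: "Inf C (x + y) - q2 y \<le> Inf C x" if q2: "q2 \<in> C" for q2
    proof (rule le_Inf)
      fix q1 assume q1: "q1 \<in> C"
      obtain q where q: "q \<in> C" and "q \<le> q1" "q \<le> q2"
        using chain[OF q1 q2] q1 q2 by auto
      then have "q x \<le> q1 x" "q y \<le> q2 y"
        by (auto dest: le_funD)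
      then show "Inf C (x + y) - q2 y \<le> q1 x"
        using Inf_le[OF q, of "x + y"] sublinear_add_le[of q x y] sub[OF q] by linarith
    qed
    have "Inf C (x + y) - Inf C x \<le> Inf C y"
    proof (rule le_Inf)
      show "Inf C (x + y) - Inf C x \<le> q y" if "q \<in> C" for q
        using Inf_add[OF that] by linarith
    qed
    then show "Inf C (x + y) \<le> Inf C x + Inf C y" by simp
  next
    obtain q0 where "q0 \<in> C" using \<open>C \<noteq> {}\<close> by blast
    then have "Inf C 0 \<le> 0"
      using Inf_le[of q0 0] sub sublinear_zero by metis
    moreover have "0 \<le> Inf C 0"
      by (intro le_Inf) (metis sub sublinear_zero order_refl)
    ultimately show "Inf C 0 = 0" by simp
  next
    fix t :: real and x assume t: "0 < t"
    have "Inf C (t *\<^sub>R x) / t \<le> Inf C x"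
    proof (rule le_Inf)
      fix q assume q: "q \<in> C"
      have "Inf C (t *\<^sub>R x) \<le> t * q x"
        using Inf_le[OF q, of "t *\<^sub>R x"] sub[OF q] sublinear_scaleR[of q t x] t by simp
      then show "Inf C (t *\<^sub>R x) / t \<le> q x"
        using t by (simp add: field_simps)
    qed
    then show "Inf C (t *\<^sub>R x) \<le> t * Inf C x"
      using t by (simp add: field_simps)
  qed
qed

lemma exists_minimal_sublinear_below:
  assumes p: "sublinear p"
  obtains m where "sublinear m" "m \<le> p" "\<And>q. sublinear q \<Longrightarrow> q \<le> m \<Longrightarrow> q = m"
proof -
  define A where "A = {q. sublinear q \<and> q \<le> p}"
  have "partial_order_on A (relation_of (\<lambda>q q'. q' \<le> q) A)"
    by (rule partial_order_on_relation_ofI) auto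
  moreover have "\<exists>u\<in>A. \<forall>q\<in>C. u \<le> q" if C: "C \<in> Chains (relation_of (\<lambda>q q'. q' \<le> q) A)" for C
  proof (cases "C = {}")
    case True
    then show ?thesis using p unfolding A_def by auto
  next
    case False
    have CA: "C \<subseteq> A" and chain: "\<And>q q'. q \<in> C \<Longrightarrow> q' \<in> C \<Longrightarrow> q \<le> q' \<or> q' \<le> q"
      using C unfolding Chains_def relation_of_def by auto
    have "sublinear (Inf C)"
      using CA by (intro sublinear_Inf_chain[OF False _ p chain]) (auto simp: A_def)
    moreover have lower: "Inf C \<le> q" if "q \<in> C" for q
      using Inf_fun_lower_bdd[OF that] CA sublinear_minus_le_bound unfolding A_def by blast
    moreover obtain q where "q \<in> C" using False by blast
    then have "Inf C \<le> p"
      using lower CA unfolding A_def by (auto intro: order_trans)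
    ultimately show ?thesis
      unfolding A_def by blast
  qed
  ultimately obtain m where "m \<in> A" "\<And>q. q \<in> A \<Longrightarrow> q \<le> m \<Longrightarrow> q = m"
    using predicate_Zorn[of A "\<lambda>q q'. q' \<le> q"] by blast
  then show ?thesis
    using that unfolding A_def by (auto intro: order_trans)
qed

lemma minimal_sublinear_linear:
  assumes m: "sublinear m" and minimal: "\<And>q. sublinear q \<Longrightarrow> q \<le> m \<Longrightarrow> q = m"
  shows "linear m"
proof -
  have add: "m (x + y) = m x + m y" for x y
  proof -
    have "directional_inf m y = m"
      using minimal sublinear_directional_inf[OF m] directional_inf_le_self[OF m]
      by (simp add: le_fun_def)
    then have "m x \<le> m (x + y) - m y"
      using directional_inf_le[OF m, of 1 y x] by simp
    then show ?thesis
      using sublinear_add_le[OF m, of x y] by simp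
  qed
  have minus: "m (- x) = - m x" for x
    using add[of x "- x"] sublinear_zero[OF m] by simp
  show ?thesis
  proof (rule linearI)
    fix r :: real and x
    show "m (r *\<^sub>R x) = r *\<^sub>R m x"
    proof (cases "0 \<le> r")
      case False
      then have "m (r *\<^sub>R x) = - m ((- r) *\<^sub>R x)"
        using minus[of "(- r) *\<^sub>R x"] by simp
      with False show ?thesis
        using sublinear_scaleR[OF m, of "- r" x] by simp
    qed (simp add: sublinear_scaleR[OF m])
  qed (rule add)
qed

lemma exists_linear_supporting_sublinear:
  assumes p: "sublinear p"
  shows "\<exists>f. linear f \<and> f \<le> p \<and> f x0 = p x0"
proof -
  \<comment> \<open>\<open>directional_inf p x0 (- x0) \<le> - p x0\<close> forces \<open>f x0 \<ge> p x0\<close>\<close>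
  obtain f where f: "sublinear f" "f \<le> directional_inf p x0"
    and minimal: "\<And>q. sublinear q \<Longrightarrow> q \<le> f \<Longrightarrow> q = f"
    using exists_minimal_sublinear_below[OF sublinear_directional_inf[OF p]] by blast
  have lin: "linear f"
    using minimal_sublinear_linear[OF f(1) minimal] .
  have le_p: "f \<le> p"
    using f(2) directional_inf_le_self[OF p] by (auto simp: le_fun_def intro: order_trans)
  have "- f x0 \<le> - p x0"
    using le_funD[OF f(2), of "- x0"] directional_inf_le[OF p, of 1 x0 "- x0"]
      sublinear_zero[OF p] linear_neg[OF lin, of x0] by simp
  then have "f x0 = p x0"
    using le_funD[OF le_p, of x0] by simp
  with lin le_p show ?thesis by blast
qed

lemma exists_norming_linear_functional:
  fixes x0 :: "'v::real_normed_vector"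
  shows "\<exists>f. linear f \<and> (\<forall>x. \<bar>f x\<bar> \<le> norm x) \<and> f x0 = norm x0"
proof -
  obtain f :: "'v \<Rightarrow> real" where f: "linear f" "f \<le> norm" "f x0 = norm x0"
    using exists_linear_supporting_sublinear[OF sublinear_norm] by blast
  have "\<bar>f x\<bar> \<le> norm x" for x
    using le_funD[OF f(2), of x] le_funD[OF f(2), of "- x"] linear_neg[OF f(1), of x] by simp
  with f show ?thesis by blast
qed

section \<open>Hermitian functionals on a star-normed space\<close>

definition hermitian_fun :: "('v \<Rightarrow> 'v) \<Rightarrow> ('v \<Rightarrow> complex) \<Rightarrow> bool" where
  "hermitian_fun st \<phi> \<longleftrightarrow> (\<forall>v. \<phi> (st v) = cnj (\<phi> v))"

lemma fun_star_eq_iff_hermitian_fun: "fun_star st \<phi> = \<phi> \<longleftrightarrow> hermitian_fun st \<phi>"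
  unfolding fun_star_def hermitian_fun_def fun_eq_iff
  by (metis complex_cnj_cnj)

lemma hermitian_fun_real:
  assumes "hermitian_fun st \<phi>" and "st h = h"
  shows "\<phi> h = complex_of_real (Re (\<phi> h))"
proof -
  have "cnj (\<phi> h) = \<phi> h"
    using assms unfolding hermitian_fun_def by metis
  then show ?thesis
    by (simp add: complex_eq_iff)
qed

lemma clin_fun_add: "clin_fun sm \<phi> \<Longrightarrow> \<phi> (x + y) = \<phi> x + \<phi> y"
  by (simp add: clin_fun_def)

lemma clin_fun_scale: "clin_fun sm \<phi> \<Longrightarrow> \<phi> (sm a x) = a * \<phi> x"
  by (simp add: clin_fun_def)

lemma dual_norm_le:
  assumes "\<And>x. cmod (\<phi> x) \<le> C * norm x" and "0 \<le> C"
  shows "dual_norm \<phi> \<le> C"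
  unfolding dual_norm_def
proof (rule cSUP_least)
  fix x :: 'a assume "x \<in> {x. norm x \<le> 1}"
  then have "C * norm x \<le> C" using assms(2) by (simp add: mult_left_le)
  then show "cmod (\<phi> x) \<le> C" using assms(1)[of x] by simp
qed (auto intro: exI[of _ 0])

lemma cnj_sgn_mult: "cnj (sgn z) * z = complex_of_real (cmod z)"
proof (cases "z = 0")
  case False
  have "cnj (sgn z) * z = cnj z * z / complex_of_real (cmod z)"
    by (simp add: sgn_eq)
  also have "cnj z * z = complex_of_real (cmod z) ^ 2"
    using complex_norm_square[of z] by (simp add: mult.commute)
  finally show ?thesis
    using False by (simp add: power2_eq_square)
qed simp

locale star_space =
  fixes sm :: "complex \<Rightarrow> 'v::real_normed_vector \<Rightarrow> 'v" and st :: "'v \<Rightarrow> 'v"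
  assumes star_normed_space: "star_normed_space sm st"
begin

lemma sm_of_real: "sm (complex_of_real r) x = r *\<^sub>R x"
  and sm_add_left: "sm (a + b) x = sm a x + sm b x"
  and sm_add_right: "sm a (x + y) = sm a x + sm a y"
  and sm_sm: "sm a (sm b x) = sm (a * b) x"
  and norm_sm: "norm (sm a x) = cmod a * norm x"
  and st_st: "st (st x) = x"
  and st_add: "st (x + y) = st x + st y"
  and st_sm: "st (sm a x) = sm (cnj a) (st x)"
  and norm_st: "norm (st x) = norm x"
  using star_normed_space by (simp_all add: star_normed_space_def)

lemma st_scaleR: "st (r *\<^sub>R x) = r *\<^sub>R st x"
  using st_sm[of "complex_of_real r" x] by (simp add: sm_of_real)

lemma st_linear: "linear st"
  by (rule linearI) (simp_all add: st_add st_scaleR)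

lemma st_bounded_linear: "bounded_linear st"
  by (rule bounded_linear_intro[of st 1]) (simp_all add: st_add st_scaleR norm_st)

lemma st_minus: "st (- x) = - st x"
  using linear_neg[OF st_linear] .

lemma st_diff: "st (x - y) = st x - st y"
  using linear_diff[OF st_linear] .

lemma clin_fun_linear:
  assumes "clin_fun sm \<phi>"
  shows "linear \<phi>"
proof (rule linearI)
  show "\<phi> (r *\<^sub>R x) = r *\<^sub>R \<phi> x" for r x
    using clin_fun_scale[OF assms, of "complex_of_real r" x] by (simp add: sm_of_real scaleR_conv_of_real)
qed (rule clin_fun_add[OF assms])

definition herm_re :: "'v \<Rightarrow> 'v" where
  "herm_re v = (1/2) *\<^sub>R (v + st v)"

definition herm_im :: "'v \<Rightarrow> 'v" where
  "herm_im v = sm (- \<i> / 2) (v - st v)"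

lemma st_herm_re: "st (herm_re v) = herm_re v"
  unfolding herm_re_def by (simp add: st_scaleR st_add st_st add.commute)

lemma st_herm_im: "st (herm_im v) = herm_im v"
proof -
  have "st (herm_im v) = sm (\<i> / 2) (st v - v)"
    unfolding herm_im_def by (simp add: st_sm st_diff st_st)
  also have "st v - v = sm (-1) (v - st v)"
    using sm_of_real[of "-1" "v - st v"] by simp
  finally show ?thesis
    unfolding herm_im_def by (simp add: sm_sm)
qed

lemma herm_re_add_herm_im: "herm_re v + sm \<i> (herm_im v) = v"
proof -
  have "sm \<i> (herm_im v) = (1/2) *\<^sub>R (v - st v)"
    unfolding herm_im_def using sm_of_real[of "1/2"] by (simp add: sm_sm)
  moreover have "(1/2) *\<^sub>R (v + st v) + (1/2) *\<^sub>R (v - st v) = v"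
    by (simp add: algebra_simps flip: scaleR_add_left)
  ultimately show ?thesis
    unfolding herm_re_def by simp
qed

lemma norm_herm_re_le: "norm (herm_re v) \<le> norm v"
  using norm_triangle_ineq[of v "st v"] by (simp add: herm_re_def norm_st)

lemma hermitian_fun_herm_parts:
  assumes "clin_fun sm \<phi>" and "hermitian_fun st \<phi>"
  shows "\<phi> (herm_re v) = complex_of_real (Re (\<phi> v))"
    and "\<phi> (herm_im v) = complex_of_real (Im (\<phi> v))"
proof -
  have "\<phi> v = \<phi> (herm_re v) + \<i> * \<phi> (herm_im v)"
    using herm_re_add_herm_im[of v] clin_fun_add[OF assms(1)] clin_fun_scale[OF assms(1)] by metis
  moreover obtain x y where "\<phi> (herm_re v) = complex_of_real x" "\<phi> (herm_im v) = complex_of_real y"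
    using hermitian_fun_real[OF assms(2)] st_herm_re st_herm_im by metis
  ultimately show "\<phi> (herm_re v) = complex_of_real (Re (\<phi> v))"
    and "\<phi> (herm_im v) = complex_of_real (Im (\<phi> v))"
    by simp_all
qed

lemma clin_fun_rotate:
  assumes "clin_fun sm \<phi>"
  obtains w where "norm w \<le> norm v" and "\<phi> w = complex_of_real (cmod (\<phi> v))"
proof
  show "norm (sm (cnj (sgn (\<phi> v))) v) \<le> norm v"
    by (simp add: norm_sm norm_sgn mult_left_le_one_le)
  show "\<phi> (sm (cnj (sgn (\<phi> v))) v) = complex_of_real (cmod (\<phi> v))"
    using cnj_sgn_mult clin_fun_scale[OF assms] by simp
qed

lemma hermitian_fun_bound:
  assumes "clin_fun sm \<phi>" and "hermitian_fun st \<phi>" and "0 \<le> C"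
    and herm_bound: "\<And>h. st h = h \<Longrightarrow> cmod (\<phi> h) \<le> C * norm h"
  shows "cmod (\<phi> v) \<le> C * norm v"
proof -
  \<comment> \<open>after rotating \<open>v\<close>, \<open>\<phi>\<close> is real there and only the hermitian part contributes\<close>
  obtain w where w: "norm w \<le> norm v" "\<phi> w = complex_of_real (cmod (\<phi> v))"
    using clin_fun_rotate[OF assms(1)] .
  have "cmod (\<phi> v) = cmod (\<phi> (herm_re w))"
    using hermitian_fun_herm_parts(1)[OF assms(1,2), of w] w(2) by simp
  also have "\<dots> \<le> C * norm (herm_re w)"
    using herm_bound st_herm_re by blast
  also have "\<dots> \<le> C * norm v"
    using norm_herm_re_le[of w] w(1) \<open>0 \<le> C\<close> by (intro mult_left_mono) auto
  finally show ?thesis .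
qed

lemma hermitian_funI:
  assumes "clin_fun sm \<phi>" and real: "\<And>h. st h = h \<Longrightarrow> Im (\<phi> h) = 0"
  shows "hermitian_fun st \<phi>"
  unfolding hermitian_fun_def
proof
  fix v
  define h k where "h = herm_re v" and "k = herm_im v"
  have v: "v = h + sm \<i> k" and "st v = h + sm (- \<i>) k"
    using herm_re_add_herm_im[of v] st_herm_re[of v] st_herm_im[of v] st_add st_sm st_st
    unfolding h_def k_def by (metis complex_cnj_i)+
  then have "\<phi> (st v) = \<phi> h - \<i> * \<phi> k" and "\<phi> v = \<phi> h + \<i> * \<phi> k"
    by (simp_all add: clin_fun_add[OF assms(1)] clin_fun_scale[OF assms(1)])
  moreover have "Im (\<phi> h) = 0" "Im (\<phi> k) = 0"
    unfolding h_def k_def using real st_herm_re st_herm_im by blast+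
  ultimately show "\<phi> (st v) = cnj (\<phi> v)"
    by (simp add: complex_eq_iff)
qed

lemma exists_clin_fun_Re:
  assumes f: "linear f" and f_bound: "\<And>x. \<bar>f x\<bar> \<le> norm x"
  obtains \<psi> where "clin_fun sm \<psi>" "\<And>v. cmod (\<psi> v) \<le> norm v" "\<And>v. Re (\<psi> v) = f v"
proof
  define \<psi> where "\<psi> v = Complex (f v) (- f (sm \<i> v))" for v
  have f_sm: "f (sm a v) = Re a * f v + Im a * f (sm \<i> v)" for a v
  proof -
    have "a = complex_of_real (Re a) + complex_of_real (Im a) * \<i>"
      by (simp add: complex_eq_iff)
    then have "sm a v = sm (complex_of_real (Re a)) v + sm (complex_of_real (Im a)) (sm \<i> v)"
      by (metis sm_add_left sm_sm)
    then have "sm a v = Re a *\<^sub>R v + Im a *\<^sub>R sm \<i> v"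
      by (simp add: sm_of_real)
    then show ?thesis
      using linear_add[OF f] linear_scale[OF f] by simp
  qed
  show clin: "clin_fun sm \<psi>"
    unfolding clin_fun_def \<psi>_def
  proof (intro conjI allI)
    fix a x
    have "f (sm \<i> (sm a x)) = - Im a * f x + Re a * f (sm \<i> x)"
      using f_sm[of "\<i> * a" x] by (simp add: sm_sm)
    then show "Complex (f (sm a x)) (- f (sm \<i> (sm a x))) = a * Complex (f x) (- f (sm \<i> x))"
      using f_sm[of a x] by (simp add: complex_eq_iff)
  qed (simp add: sm_add_right linear_add[OF f] complex_eq_iff)
  show "Re (\<psi> v) = f v" for v
    by (simp add: \<psi>_def)
  show "cmod (\<psi> v) \<le> norm v" for v
  proof -
    obtain w where w: "norm w \<le> norm v" "\<psi> w = complex_of_real (cmod (\<psi> v))"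
      using clin_fun_rotate[OF clin] .
    then have "cmod (\<psi> v) = f w"
      by (metis Re_complex_of_real \<psi>_def complex.sel(1))
    with w(1) f_bound[of w] show ?thesis by simp
  qed
qed

lemma exists_hermitian_fun_Re:
  assumes "clin_fun sm \<psi>" and \<psi>_bound: "\<And>v. cmod (\<psi> v) \<le> norm v"
  obtains \<Phi> where "clin_fun sm \<Phi>" "hermitian_fun st \<Phi>" "\<And>v. cmod (\<Phi> v) \<le> norm v"
    "\<And>h. st h = h \<Longrightarrow> \<Phi> h = complex_of_real (Re (\<psi> h))"
proof
  define \<Phi> where "\<Phi> v = (\<psi> v + cnj (\<psi> (st v))) / 2" for v
  show "clin_fun sm \<Phi>"
    unfolding clin_fun_def \<Phi>_def
    by (simp add: st_add st_sm clin_fun_add[OF assms(1)] clin_fun_scale[OF assms(1)]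
        algebra_simps add_divide_distrib)
  show "hermitian_fun st \<Phi>"
    unfolding hermitian_fun_def \<Phi>_def by (simp add: st_st add.commute)
  show "cmod (\<Phi> v) \<le> norm v" for v
    using norm_triangle_ineq[of "\<psi> v" "cnj (\<psi> (st v))"] \<psi>_bound[of v] \<psi>_bound[of "st v"]
    by (simp add: \<Phi>_def norm_divide norm_st)
  show "\<Phi> h = complex_of_real (Re (\<psi> h))" if "st h = h" for h
    using that by (simp add: \<Phi>_def complex_eq_iff)
qed

lemma exists_hermitian_norming_fun:
  assumes "st h = h"
  obtains \<Phi> where "clin_fun sm \<Phi>" "hermitian_fun st \<Phi>" "\<And>v. cmod (\<Phi> v) \<le> norm v"
    "\<Phi> h = complex_of_real (norm h)"
proof -
  obtain f where "linear f" "\<And>x. \<bar>f x\<bar> \<le> norm x" "f h = norm h"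
    using exists_norming_linear_functional[of h] by blast
  moreover obtain \<psi> where "clin_fun sm \<psi>" "\<And>v. cmod (\<psi> v) \<le> norm v" "\<And>v. Re (\<psi> v) = f v"
    using exists_clin_fun_Re calculation(1,2) by blast
  ultimately show ?thesis
    using exists_hermitian_fun_Re that assms by metis
qed

lemma norm_le_dual_norm:
  assumes "\<phi> \<in> dual_space sm"
  shows "cmod (\<phi> x) \<le> dual_norm \<phi> * norm x"
proof -
  have lin: "linear \<phi>" and "bdd_fun \<phi>"
    using assms clin_fun_linear unfolding dual_space_def by blast+
  then obtain K where K: "\<And>x. cmod (\<phi> x) \<le> K * norm x"
    unfolding bdd_fun_def by blast
  have "bdd_above ((\<lambda>x. cmod (\<phi> x)) ` {x. norm x \<le> 1})"
  proof (rule bdd_aboveI2)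
    fix x :: 'v assume "x \<in> {x. norm x \<le> 1}"
    have "K * norm x \<le> \<bar>K\<bar> * norm x"
      by (simp add: mult_right_mono)
    also have "\<dots> \<le> \<bar>K\<bar>"
      using \<open>x \<in> {x. norm x \<le> 1}\<close> by (simp add: mult_left_le)
    finally show "cmod (\<phi> x) \<le> \<bar>K\<bar>"
      using K[of x] by linarith
  qed
  then have unit_le: "cmod (\<phi> y) \<le> dual_norm \<phi>" if "norm y \<le> 1" for y
    unfolding dual_norm_def using that by (intro cSUP_upper) auto
  show ?thesis
  proof (cases "x = 0")
    case False
    have "cmod (\<phi> x) / norm x = cmod (\<phi> ((1 / norm x) *\<^sub>R x))"
      by (simp add: linear_scale[OF lin] divide_inverse mult.commute)
    also have "\<dots> \<le> dual_norm \<phi>"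
      using False by (intro unit_le) simp
    finally show ?thesis
      using False by (simp add: divide_le_eq)
  qed (simp add: linear_0[OF lin])
qed

lemma mem_S_eps_iff:
  assumes "0 \<le> \<epsilon>"
  shows "\<phi> \<in> S_eps sm st e \<epsilon> \<longleftrightarrow>
    clin_fun sm \<phi> \<and> hermitian_fun st \<phi> \<and> \<phi> e = 1 \<and> (\<forall>v. cmod (\<phi> v) \<le> \<epsilon> * norm v)"
    (is "_ \<longleftrightarrow> ?rhs")
proof
  assume "\<phi> \<in> S_eps sm st e \<epsilon>"
  then have "\<phi> \<in> dual_space sm" "dual_norm \<phi> \<le> \<epsilon>"
    by (auto simp: S_eps_def dual_herm_e_def dual_herm_def dual_ball_def)
  then have "cmod (\<phi> v) \<le> \<epsilon> * norm v" for v
    using norm_le_dual_norm[of \<phi> v] mult_right_mono[of "dual_norm \<phi>" \<epsilon> "norm v"] by simp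
  with \<open>\<phi> \<in> S_eps sm st e \<epsilon>\<close> show ?rhs
    by (auto simp: S_eps_def dual_herm_e_def dual_herm_def dual_space_def
        fun_star_eq_iff_hermitian_fun)
next
  assume ?rhs
  with assms show "\<phi> \<in> S_eps sm st e \<epsilon>"
    by (auto simp: S_eps_def dual_herm_e_def dual_herm_def dual_ball_def dual_space_def
        bdd_fun_def fun_star_eq_iff_hermitian_fun intro: dual_norm_le)
qed

end

section \<open>The states S_eps and the cone c_eps\<close>

locale unital_star_space = star_space sm st
  for sm :: "complex \<Rightarrow> 'v::real_normed_vector \<Rightarrow> 'v" and st +
  fixes e :: 'v and \<epsilon> :: real
  assumes st_e: "st e = e" and e_nonzero: "e \<noteq> 0" and eps_gt: "1 / norm e < \<epsilon>"
begin

abbreviation S :: "('v \<Rightarrow> complex) set" where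
  "S \<equiv> S_eps sm st e \<epsilon>"

lemma eps_pos: "0 < \<epsilon>"
proof -
  have "0 < 1 / norm e"
    using e_nonzero by simp
  with eps_gt show ?thesis by linarith
qed

lemma mem_S: "\<phi> \<in> S \<longleftrightarrow>
    clin_fun sm \<phi> \<and> hermitian_fun st \<phi> \<and> \<phi> e = 1 \<and> (\<forall>v. cmod (\<phi> v) \<le> \<epsilon> * norm v)"
  using mem_S_eps_iff eps_pos by simp

lemma S_clin_fun: "\<phi> \<in> S \<Longrightarrow> clin_fun sm \<phi>"
  and S_hermitian_fun: "\<phi> \<in> S \<Longrightarrow> hermitian_fun st \<phi>"
  and S_at_e: "\<phi> \<in> S \<Longrightarrow> \<phi> e = 1"
  and S_bound: "\<phi> \<in> S \<Longrightarrow> cmod (\<phi> v) \<le> \<epsilon> * norm v"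
  using mem_S by blast+

lemma S_linear: "\<phi> \<in> S \<Longrightarrow> linear \<phi>"
  using clin_fun_linear[OF S_clin_fun] .

lemma S_bounded_linear:
  assumes "\<phi> \<in> S"
  shows "bounded_linear \<phi>"
proof (rule bounded_linear_intro[of \<phi> \<epsilon>])
  show "\<phi> (x + y) = \<phi> x + \<phi> y" "\<phi> (r *\<^sub>R x) = r *\<^sub>R \<phi> x" for x y r
    using S_linear[OF assms] by (simp_all add: linear_add linear_scale)
  show "norm (\<phi> x) \<le> norm x * \<epsilon>" for x
    using S_bound[OF assms, of x] by (simp add: mult.commute)
qed

lemma exists_S_inverse_norm_e:
  obtains \<phi>0 where "\<phi>0 \<in> S" "\<And>v. cmod (\<phi>0 v) \<le> norm v / norm e"
proof -
  obtain \<Phi> where \<Phi>: "clin_fun sm \<Phi>" "hermitian_fun st \<Phi>" "\<And>v. cmod (\<Phi> v) \<le> norm v"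
    "\<Phi> e = complex_of_real (norm e)"
    using exists_hermitian_norming_fun[OF st_e] by blast
  define \<phi>0 where "\<phi>0 v = \<Phi> v / complex_of_real (norm e)" for v
  have bound: "cmod (\<phi>0 v) \<le> norm v / norm e" for v
    using \<Phi>(3)[of v] e_nonzero by (simp add: \<phi>0_def norm_divide divide_right_mono)
  moreover have "norm v / norm e \<le> \<epsilon> * norm v" for v
    using eps_gt mult_right_mono[of "1 / norm e" \<epsilon> "norm v"] by simp
  ultimately have "cmod (\<phi>0 v) \<le> \<epsilon> * norm v" for v
    by (meson order_trans)
  moreover have "clin_fun sm \<phi>0" "hermitian_fun st \<phi>0" "\<phi>0 e = 1"
    using \<Phi> e_nonzero
    by (simp_all add: \<phi>0_def clin_fun_def hermitian_fun_def add_divide_distrib)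
  ultimately have "\<phi>0 \<in> S"
    unfolding mem_S by blast
  with bound that show ?thesis by blast
qed

lemma perturbed_state_mem_S:
  assumes \<phi>0: "\<phi>0 \<in> S" "\<And>v. cmod (\<phi>0 v) \<le> norm v / norm e"
    and \<psi>: "clin_fun sm \<psi>" "hermitian_fun st \<psi>" "\<And>v. cmod (\<psi> v) \<le> norm v"
    and t: "0 \<le> t" "1 / norm e + 2 * t \<le> \<epsilon>"
  shows "(\<lambda>v. \<phi>0 v + complex_of_real t * (\<psi> v - \<psi> e * \<phi>0 v)) \<in> S"
    (is "?\<phi> \<in> S")
proof -
  have clin0: "clin_fun sm \<phi>0" and herm0: "hermitian_fun st \<phi>0"
    using S_clin_fun S_hermitian_fun \<phi>0(1) by blast+
  have \<psi>_e: "cnj (\<psi> e) = \<psi> e"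
    using hermitian_fun_real[OF \<psi>(2) st_e] by (metis complex_cnj_complex_of_real)
  have "cmod (?\<phi> v) \<le> \<epsilon> * norm v" for v
  proof -
    have "cmod (\<psi> e * \<phi>0 v) \<le> norm e * (norm v / norm e)"
      unfolding norm_mult using \<psi>(3)[of e] \<phi>0(2)[of v] by (intro mult_mono) auto
    then have "cmod (\<psi> e * \<phi>0 v) \<le> norm v"
      using e_nonzero by simp
    then have "cmod (\<psi> v - \<psi> e * \<phi>0 v) \<le> norm v + norm v"
      using norm_triangle_ineq4[of "\<psi> v" "\<psi> e * \<phi>0 v"] \<psi>(3)[of v] by linarith
    moreover have "cmod (?\<phi> v) \<le> cmod (\<phi>0 v) + t * cmod (\<psi> v - \<psi> e * \<phi>0 v)"
      using norm_triangle_ineq[of "\<phi>0 v" "complex_of_real t * (\<psi> v - \<psi> e * \<phi>0 v)"] t(1)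
      by (simp add: norm_mult)
    ultimately have "cmod (?\<phi> v) \<le> norm v / norm e + t * (norm v + norm v)"
      using \<phi>0(2)[of v] mult_left_mono[OF _ t(1)] by (smt (verit))
    also have "\<dots> = (1 / norm e + 2 * t) * norm v"
      by (simp add: algebra_simps)
    also have "\<dots> \<le> \<epsilon> * norm v"
      using t(2) by (intro mult_right_mono) auto
    finally show ?thesis .
  qed
  moreover have "clin_fun sm ?\<phi>"
    using clin0 \<psi>(1) by (simp add: clin_fun_def algebra_simps)
  moreover have "hermitian_fun st ?\<phi>"
    using herm0 \<psi>(2) \<psi>_e by (simp add: hermitian_fun_def)
  moreover have "?\<phi> e = 1"
    using S_at_e[OF \<phi>0(1)] by simp
  ultimately show ?thesis
    unfolding mem_S by blast
qed

lemma S_large_at_hermitian: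
  assumes \<phi>0: "\<phi>0 \<in> S" "\<And>v. cmod (\<phi>0 v) \<le> norm v / norm e"
    and t: "0 \<le> t" "1 / norm e + 2 * t \<le> \<epsilon>"
    and h: "st h = h"
  shows "\<exists>s\<in>S. min (1 / (2 * norm e)) (t / 4) * norm h \<le> cmod (s h)"
proof -
  obtain \<psi> where \<psi>: "clin_fun sm \<psi>" "hermitian_fun st \<psi>" "\<And>v. cmod (\<psi> v) \<le> norm v"
    and \<psi>_h: "\<psi> h = complex_of_real (norm h)"
    using exists_hermitian_norming_fun[OF h] by blast
  define \<phi> where "\<phi> v = \<phi>0 v + complex_of_real t * (\<psi> v - \<psi> e * \<phi>0 v)" for v
  have \<phi>: "\<phi> \<in> S"
    unfolding \<phi>_def using perturbed_state_mem_S[OF \<phi>0 \<psi> t] .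
  \<comment> \<open>if \<open>\<phi>0\<close> is small at \<open>h\<close>, then \<open>\<phi> h - \<phi>0 h \<approx> t * norm h\<close> is not\<close>
  have "t * (norm h / 2) \<le> cmod (\<phi> h) + cmod (\<phi>0 h) \<or> norm h / (2 * norm e) \<le> cmod (\<phi>0 h)"
  proof (rule disjCI)
    assume "\<not> norm h / (2 * norm e) \<le> cmod (\<phi>0 h)"
    then have "cmod (\<psi> e * \<phi>0 h) \<le> norm e * (norm h / (2 * norm e))"
      unfolding norm_mult using \<psi>(3)[of e] by (intro mult_mono) auto
    then have "cmod (\<psi> e * \<phi>0 h) \<le> norm h / 2"
      using e_nonzero by simp
    then have "norm h / 2 \<le> cmod (complex_of_real (norm h) - \<psi> e * \<phi>0 h)"
      using norm_triangle_ineq2[of "complex_of_real (norm h)" "\<psi> e * \<phi>0 h"] by simp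
    then have "t * (norm h / 2) \<le> t * cmod (complex_of_real (norm h) - \<psi> e * \<phi>0 h)"
      using t(1) by (rule mult_left_mono)
    also have "\<dots> = cmod (\<phi> h - \<phi>0 h)"
      using t(1) by (simp add: \<phi>_def \<psi>_h norm_mult)
    also have "\<dots> \<le> cmod (\<phi> h) + cmod (\<phi>0 h)"
      by (rule norm_triangle_ineq4)
    finally show "t * (norm h / 2) \<le> cmod (\<phi> h) + cmod (\<phi>0 h)" .
  qed
  moreover have "min (1 / (2 * norm e)) (t / 4) * norm h \<le> 1 / (2 * norm e) * norm h"
    and "min (1 / (2 * norm e)) (t / 4) * norm h \<le> t / 4 * norm h"
    by (intro mult_right_mono; simp)+
  ultimately have "min (1 / (2 * norm e)) (t / 4) * norm h \<le> cmod (\<phi>0 h) \<or>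
      min (1 / (2 * norm e)) (t / 4) * norm h \<le> cmod (\<phi> h)"
    by auto
  with \<phi> \<phi>0(1) show ?thesis
    by blast
qed

lemma exists_S_lower_bound_hermitian:
  obtains c where "0 < c" "\<And>h. st h = h \<Longrightarrow> \<exists>s\<in>S. c * norm h \<le> cmod (s h)"
proof -
  define t where "t = (\<epsilon> - 1 / norm e) / 2"
  have t: "0 < t" "1 / norm e + 2 * t \<le> \<epsilon>"
    using eps_gt by (simp_all add: t_def field_simps)
  obtain \<phi>0 where "\<phi>0 \<in> S" "\<And>v. cmod (\<phi>0 v) \<le> norm v / norm e"
    using exists_S_inverse_norm_e by blast
  then have "\<exists>s\<in>S. min (1 / (2 * norm e)) (t / 4) * norm h \<le> cmod (s h)" if "st h = h" for h
    using S_large_at_hermitian t that by simp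
  moreover have "0 < min (1 / (2 * norm e)) (t / 4)"
    using t e_nonzero by simp
  ultimately show ?thesis
    using that by blast
qed

lemma exists_S_lower_bound:
  obtains c where "0 < c" "\<And>v. \<exists>s\<in>S. c * norm v \<le> cmod (s v)"
proof -
  obtain c where c: "0 < c" "\<And>h. st h = h \<Longrightarrow> \<exists>s\<in>S. c * norm h \<le> cmod (s h)"
    using exists_S_lower_bound_hermitian by blast
  have lower: "\<exists>s\<in>S. c / 2 * norm v \<le> cmod (s v)" for v
  proof -
    have "norm v \<le> norm (herm_re v) + norm (herm_im v)"
      using norm_triangle_ineq[of "herm_re v" "sm \<i> (herm_im v)"]
      by (simp add: herm_re_add_herm_im norm_sm)
    moreover define h where
      "h = (if norm (herm_im v) \<le> norm (herm_re v) then herm_re v else herm_im v)"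
    ultimately have h: "h = herm_re v \<or> h = herm_im v" and "norm v \<le> 2 * norm h"
      by (auto split: if_splits)
    moreover obtain s where s: "s \<in> S" "c * norm h \<le> cmod (s h)"
      using c(2) h st_herm_re st_herm_im by blast
    moreover have "cmod (s h) \<le> cmod (s v)"
      using h hermitian_fun_herm_parts[OF S_clin_fun[OF s(1)] S_hermitian_fun[OF s(1)], of v]
      by (auto simp: abs_Re_le_cmod abs_Im_le_cmod)
    moreover have "c * norm v \<le> c * (2 * norm h)"
      using c(1) \<open>norm v \<le> 2 * norm h\<close> by simp
    ultimately have "c / 2 * norm v \<le> cmod (s v)"
      by linarith
    with s(1) show ?thesis by blast
  qed
  show ?thesis
    using c(1) lower by (intro that[of "c / 2"]) simp_all
qed

lemma S_separates:
  assumes "\<And>s. s \<in> S \<Longrightarrow> s v = 0"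
  shows "v = 0"
proof -
  obtain c s where "0 < c" "s \<in> S" "c * norm v \<le> cmod (s v)"
    using exists_S_lower_bound by metis
  with assms[of s] have "c * norm v \<le> 0"
    by simp
  with \<open>0 < c\<close> show ?thesis
    by (simp add: mult_le_0_iff)
qed

lemma S_nonempty: "S \<noteq> {}"
  using exists_S_inverse_norm_e by blast

lemma closed_S: "closed S"
proof -
  have "S = {\<phi>. (\<forall>x y. \<phi> (x + y) = \<phi> x + \<phi> y) \<and> (\<forall>a x. \<phi> (sm a x) = a * \<phi> x) \<and>
      (\<forall>v. \<phi> (st v) = cnj (\<phi> v)) \<and> \<phi> e = 1 \<and> (\<forall>v. cmod (\<phi> v) \<le> \<epsilon> * norm v)}"
    by (rule set_eqI) (simp only: mem_S clin_fun_def hermitian_fun_def mem_Collect_eq conj_assoc)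
  also have "closed \<dots>"
    by (intro closed_Collect_conj closed_Collect_all closed_Collect_eq closed_Collect_le
        continuous_intros continuous_on_product_coordinates)
  finally show ?thesis .
qed

lemma compact_S: "compact S"
proof -
  define B :: "('v \<Rightarrow> complex) set" where "B = PiE UNIV (\<lambda>v. cball 0 (\<epsilon> * norm v))"
  have "compactin (product_topology (\<lambda>_. euclidean) UNIV) B"
    unfolding B_def compactin_PiE by simp
  then have "compact B"
    by (simp add: euclidean_product_topology)
  moreover have "S \<subseteq> B"
    using S_bound by (auto simp: B_def)
  ultimately show ?thesis
    using compact_Int_closed[OF _ closed_S] by (metis inf.absorb2)
qed

abbreviation cone :: "'v set" where
  "cone \<equiv> cone_eps sm st e \<epsilon>"

lemma mem_cone: "v \<in> cone \<longleftrightarrow> st v = v \<and> (\<forall>s\<in>S. cnonneg (s v))"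
  by (simp add: cone_eps_def herm_part_def)

lemma add_norm_e_mem_cone:
  assumes h: "st h = h"
  shows "h + (\<epsilon> * norm h) *\<^sub>R e \<in> cone"
  unfolding mem_cone
proof (intro conjI ballI)
  show "st (h + (\<epsilon> * norm h) *\<^sub>R e) = h + (\<epsilon> * norm h) *\<^sub>R e"
    by (simp add: st_add st_scaleR h st_e)
next
  fix s assume s: "s \<in> S"
  obtain x where x: "s h = complex_of_real x"
    using hermitian_fun_real[OF S_hermitian_fun[OF s] h] by blast
  have "\<bar>x\<bar> \<le> \<epsilon> * norm h"
    using S_bound[OF s, of h] x by simp
  moreover have "s (h + (\<epsilon> * norm h) *\<^sub>R e) = complex_of_real (x + \<epsilon> * norm h)"
    using x S_at_e[OF s] linear_add[OF S_linear[OF s]] linear_scale[OF S_linear[OF s]]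
    by (simp add: scaleR_conv_of_real)
  ultimately show "cnonneg (s (h + (\<epsilon> * norm h) *\<^sub>R e))"
    by (simp add: cnonneg_def)
qed

lemma cone_is_cone: "is_cone st cone"
  unfolding is_cone_def
proof (intro conjI ballI allI impI)
  show "cone \<subseteq> herm_part st"
    by (auto simp: cone_eps_def)
  have "0 \<in> cone"
    unfolding mem_cone
  proof (intro conjI ballI)
    fix s assume "s \<in> S"
    then show "cnonneg (s 0)"
      using linear_0[OF S_linear[of s]] by (simp add: cnonneg_def)
  qed (rule linear_0[OF st_linear])
  then show "cone \<noteq> {}" by blast
next
  fix x y assume "x \<in> cone" "y \<in> cone"
  then show "x + y \<in> cone"
    unfolding mem_cone
  proof (intro conjI ballI)
    fix s assume "s \<in> S"
    with \<open>x \<in> cone\<close> \<open>y \<in> cone\<close> show "cnonneg (s (x + y))"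
      using linear_add[OF S_linear[of s]] by (simp add: mem_cone cnonneg_def)
  qed (simp add: mem_cone st_add)
next
  fix x and r :: real assume "x \<in> cone" "0 \<le> r"
  then show "r *\<^sub>R x \<in> cone"
    unfolding mem_cone
  proof (intro conjI ballI)
    fix s assume "s \<in> S"
    with \<open>x \<in> cone\<close> \<open>0 \<le> r\<close> show "cnonneg (s (r *\<^sub>R x))"
      using linear_scale[OF S_linear[of s]] by (simp add: mem_cone cnonneg_def)
  qed (simp add: mem_cone st_scaleR)
qed

lemma cone_separated: "separated_cone cone"
  unfolding separated_cone_def
proof
  show "cone \<inter> uminus ` cone \<subseteq> {0}"
  proof
    fix v assume "v \<in> cone \<inter> uminus ` cone"
    then have v: "v \<in> cone" "- v \<in> cone" by auto
    have "s v = 0" if "s \<in> S" for s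
    proof -
      have "cnonneg (s v)" "cnonneg (s (- v))"
        using v that by (auto simp: mem_cone)
      then show ?thesis
        using linear_neg[OF S_linear[OF that], of v] by (simp add: cnonneg_def complex_eq_iff)
    qed
    then show "v \<in> {0}"
      using S_separates by blast
  qed
  show "{0} \<subseteq> cone \<inter> uminus ` cone"
    using cone_is_cone by (force simp: is_cone_def)
qed

lemma cone_closed: "closed cone"
proof -
  have "cone = {v. st v = v} \<inter> (\<Inter>s\<in>S. {v. Im (s v) = 0} \<inter> {v. 0 \<le> Re (s v)})"
    by (auto simp: mem_cone cnonneg_def)
  also have "closed \<dots>"
    using S_bounded_linear st_bounded_linear
    by (intro closed_Int closed_INT ballI closed_Collect_eq closed_Collect_le
        linear_continuous_on bounded_linear_compose[OF bounded_linear_Re]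
        bounded_linear_compose[OF bounded_linear_Im] continuous_on_const continuous_on_id) auto
  finally show ?thesis .
qed

lemma cone_unital: "unital_cone st e cone"
  unfolding unital_cone_def herm_part_def
  using add_norm_e_mem_cone eps_pos by (intro ballI exI[of _ "\<epsilon> * norm _"]) auto

lemma state_hermitian_bound:
  assumes \<phi>: "\<phi> \<in> state_space sm e cone" and h: "st h = h"
  shows "Im (\<phi> h) = 0" and "\<bar>Re (\<phi> h)\<bar> \<le> \<epsilon> * norm h"
proof -
  have lin: "linear \<phi>" and pos: "\<And>v. v \<in> cone \<Longrightarrow> cnonneg (\<phi> v)" and "\<phi> e = 1"
    using \<phi> clin_fun_linear by (auto simp: state_space_def)
  have "cnonneg (\<phi> (h + (\<epsilon> * norm h) *\<^sub>R e))" "cnonneg (\<phi> (- h + (\<epsilon> * norm h) *\<^sub>R e))"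
    using pos add_norm_e_mem_cone h st_minus[of h] by (metis norm_minus_cancel)+
  then show "Im (\<phi> h) = 0" and "\<bar>Re (\<phi> h)\<bar> \<le> \<epsilon> * norm h"
    using \<open>\<phi> e = 1\<close>
    by (auto simp: cnonneg_def linear_add[OF lin] linear_diff[OF lin] linear_scale[OF lin])
qed

lemma state_space_cone: "state_space sm e cone = S"
proof
  show "S \<subseteq> state_space sm e cone"
    using S_clin_fun S_at_e by (auto simp: state_space_def mem_cone)
next
  show "state_space sm e cone \<subseteq> S"
  proof
    fix \<phi> assume \<phi>: "\<phi> \<in> state_space sm e cone"
    then have clin: "clin_fun sm \<phi>" and "\<phi> e = 1"
      by (auto simp: state_space_def)
    have herm: "hermitian_fun st \<phi>"
      using clin state_hermitian_bound(1)[OF \<phi>] by (rule hermitian_funI)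
    have "cmod (\<phi> h) \<le> \<epsilon> * norm h" if "st h = h" for h
      using state_hermitian_bound[OF \<phi> that] by (simp add: cmod_eq_Re)
    then have "cmod (\<phi> v) \<le> \<epsilon> * norm v" for v
      using hermitian_fun_bound[OF clin herm] eps_pos by simp
    with clin herm \<open>\<phi> e = 1\<close> show "\<phi> \<in> S"
      by (simp add: mem_S)
  qed
qed

lemma concrete_function_system_cone: "concrete_function_system sm st e cone S"
  unfolding concrete_function_system_def
proof (intro conjI ballI allI)
  show "S \<subseteq> state_space sm e cone"
    using state_space_cone by simp
  show "compact S"
    by (rule compact_S)
  show "continuous_on S (\<lambda>\<phi>. \<phi> v)" for v
    by (rule continuous_on_subset[OF continuous_on_product_coordinates]) simp
  show "\<phi> e = 1" "\<phi> (st v) = cnj (\<phi> v)" if "\<phi> \<in> S" for \<phi> v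
    using S_at_e S_hermitian_fun that by (auto simp: hermitian_fun_def)
  show "inj_on (\<lambda>v. restrict (\<lambda>\<phi>. \<phi> v) S) UNIV"
  proof (rule inj_onI)
    fix v w assume "restrict (\<lambda>\<phi>. \<phi> v) S = restrict (\<lambda>\<phi>. \<phi> w) S"
    then have "s (v - w) = 0" if "s \<in> S" for s
      using that linear_diff[OF S_linear[OF that]] by (metis restrict_apply' right_minus_eq)
    then show "v = w"
      using S_separates by fastforce
  qed
  show "(\<lambda>v. restrict (\<lambda>\<phi>. \<phi> v) S) ` cone =
      (\<lambda>v. restrict (\<lambda>\<phi>. \<phi> v) S) ` herm_part st \<inter> {f. \<forall>\<phi>\<in>S. cnonneg (f \<phi>)}"
    by (auto simp: mem_cone herm_part_def)
qed

lemma norm_eps_equivalent: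
  "\<exists>a b. 0 < a \<and> 0 < b \<and>
    (\<forall>v. a * norm v \<le> norm_eps sm st e \<epsilon> v \<and> norm_eps sm st e \<epsilon> v \<le> b * norm v)"
proof -
  obtain c where c: "0 < c" "\<And>v. \<exists>s\<in>S. c * norm v \<le> cmod (s v)"
    using exists_S_lower_bound by blast
  have "c * norm v \<le> norm_eps sm st e \<epsilon> v" for v
  proof -
    obtain s where "s \<in> S" "c * norm v \<le> cmod (s v)"
      using c(2) by blast
    moreover have "bdd_above ((\<lambda>s. cmod (s v)) ` S)"
      using S_bound by (intro bdd_aboveI2) blast
    ultimately show ?thesis
      unfolding norm_eps_def by (meson cSUP_upper order_trans)
  qed
  moreover have "norm_eps sm st e \<epsilon> v \<le> \<epsilon> * norm v" for v
    unfolding norm_eps_def using S_nonempty S_bound by (intro cSUP_least)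
  ultimately show ?thesis
    using c(1) eps_pos by blast
qed

end

theorem theorem4p5:
  fixes sm :: "complex \<Rightarrow> 'v::real_normed_vector \<Rightarrow> 'v"
    and st :: "'v \<Rightarrow> 'v" and e :: 'v and \<epsilon> :: real
  assumes "unital_star_normed_space sm st e"
    and "\<epsilon> > 1 / norm e"
  shows "is_cone st (cone_eps sm st e \<epsilon>) \<and>
         separated_cone (cone_eps sm st e \<epsilon>) \<and>
         closed (cone_eps sm st e \<epsilon>) \<and>
         unital_cone st e (cone_eps sm st e \<epsilon>) \<and>
         state_space sm e (cone_eps sm st e \<epsilon>) = S_eps sm st e \<epsilon> \<and>
         concrete_function_system sm st e (cone_eps sm st e \<epsilon>) (S_eps sm st e \<epsilon>) \<and>
         (\<exists>a b. 0 < a \<and> 0 < b \<and>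
            (\<forall>v. a * norm v \<le> norm_eps sm st e \<epsilon> v \<and> norm_eps sm st e \<epsilon> v \<le> b * norm v))"
proof -
  have "star_normed_space sm st" "st e = e" "e \<noteq> 0"
    using assms(1) by (auto simp: unital_star_normed_space_def herm_part_def)
  then interpret unital_star_space sm st e \<epsilon>
    using assms(2) by unfold_locales auto
  show ?thesis
    using cone_is_cone cone_separated cone_closed cone_unital state_space_cone
      concrete_function_system_cone norm_eps_equivalent by blast
qed

end
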